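(* Let $G$ be a finite simple graph on $[d]$, $k\ge1$, and let $f,g$ be $k$-colorings of an induced subgraph $G_0$ of $G$. The following are equivalent: (i) $f\sim_k g$ (as $k$-colorings of $G_0$); (ii) ${\bf x}_f-{\bf x}_g\in\langle [I_G]_2\rangle$; (iii) ${\bf x}_f-{\bf x}_g\in J_G$.
   Context: A $k$-coloring of a graph $H$ is a map $f:V(H)\to[k]$ (not necessarily surjective) with $f(u)\neq f(v)$ for every edge. A Kempe switching: for colors $i<j$ and a connected component $C$ of $H[f^{-1}(i)\cup f^{-1}(j)]$, interchange $i$ and $j$ on $C$. $f\sim_k g$ if $g$ is obtained from $f$ by a finite sequence of Kempe switchings (through $k$-colorings of $H$). A stable set of $G$ is a subset of $[d]$ with no edge of $G$ (including $\emptyset$ and singletons); $S(G)$ is the set of stable sets; $R[G]=\mathbb{K}[x_S : S\in S(G)]$ over a field $\mathbb{K}$, all variables of degree $1$. For a $k$-coloring $f$ of an induced subgraph $G[W]$, ${\bf x}_f=\prod_{\ell=1}^k x_{f^{-1}(\ell)}$. $I_G$ is the kernel of $\pi:R[G]\to\mathbb{K}[t_1,\dots,t_d,s]$, $\pi(x_S)=s\prod_{j\in S}t_j$; $\langle [I_G]_2\rangle$ is the ideal generated by the degree-$2$ homogeneous elements of $I_G$. $J_G$ is the ideal generated by all ${\bf x}_f-{\bf x}_g$ with $f,g$ $2$-colorings of a common induced subgraph of $G$. *)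

theory Defs
  imports Main "HOL-Library.Poly_Mapping"
begin

definition simple_graph_on :: "nat \<Rightarrow> (nat \<Rightarrow> nat \<Rightarrow> bool) \<Rightarrow> bool" where
  "simple_graph_on d adj \<longleftrightarrow>
     (\<forall>u v. adj u v \<longrightarrow> adj v u) \<and> (\<forall>u. \<not> adj u u) \<and>
     (\<forall>u v. adj u v \<longrightarrow> u \<in> {1..d} \<and> v \<in> {1..d})"

text \<open>A k-coloring of the induced subgraph G[W]: a map W \<rightarrow> [k] (values outside W irrelevant).\<close>
definition is_coloring :: "(nat \<Rightarrow> nat \<Rightarrow> bool) \<Rightarrow> nat set \<Rightarrow> nat \<Rightarrow> (nat \<Rightarrow> nat) \<Rightarrow> bool" where
  "is_coloring adj W k f \<longleftrightarrow>
     (\<forall>v\<in>W. f v \<in> {1..k}) \<and> (\<forall>u\<in>W. \<forall>v\<in>W. adj u v \<longrightarrow> f u \<noteq> f v)"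

definition component_of :: "(nat \<Rightarrow> nat \<Rightarrow> bool) \<Rightarrow> nat set \<Rightarrow> nat \<Rightarrow> nat set" where
  "component_of adj V u = {v. (\<lambda>a b. a \<in> V \<and> b \<in> V \<and> adj a b)\<^sup>*\<^sup>* u v}"

definition swap_colors :: "nat \<Rightarrow> nat \<Rightarrow> nat \<Rightarrow> nat" where
  "swap_colors i j c = (if c = i then j else if c = j then i else c)"

definition kempe_step :: "(nat \<Rightarrow> nat \<Rightarrow> bool) \<Rightarrow> nat set \<Rightarrow> nat \<Rightarrow> (nat \<Rightarrow> nat) \<Rightarrow> (nat \<Rightarrow> nat) \<Rightarrow> bool" where
  "kempe_step adj W k f g \<longleftrightarrow>
     is_coloring adj W k f \<and> is_coloring adj W k g \<and>
     (\<exists>i j u. 1 \<le> i \<and> i < j \<and> j \<le> k \<and>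
        u \<in> {v\<in>W. f v = i \<or> f v = j} \<and>
        (let C = component_of adj {v\<in>W. f v = i \<or> f v = j} u in
          \<forall>v. g v = (if v \<in> C then swap_colors i j (f v) else f v)))"

text \<open>Kempe equivalence f \<sim>_k g of k-colorings of G[W] (colorings compared on W only).\<close>
definition kempe_equiv :: "(nat \<Rightarrow> nat \<Rightarrow> bool) \<Rightarrow> nat set \<Rightarrow> nat \<Rightarrow> (nat \<Rightarrow> nat) \<Rightarrow> (nat \<Rightarrow> nat) \<Rightarrow> bool" where
  "kempe_equiv adj W k f g \<longleftrightarrow>
     (\<exists>h. (kempe_step adj W k)\<^sup>*\<^sup>* f h \<and> (\<forall>v\<in>W. h v = g v))"

definition stable_sets :: "nat \<Rightarrow> (nat \<Rightarrow> nat \<Rightarrow> bool) \<Rightarrow> nat set set" where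
  "stable_sets d adj = {S. S \<subseteq> {1..d} \<and> (\<forall>u\<in>S. \<forall>v\<in>S. \<not> adj u v)}"

text \<open>Multivariate polynomials over a field with variables indexed by 'v:
finitely supported maps from monomials (exponent vectors) to coefficients.\<close>
type_synonym ('v, 'a) mpoly = "('v \<Rightarrow>\<^sub>0 nat) \<Rightarrow>\<^sub>0 'a"

definition pvar :: "'v \<Rightarrow> ('v, 'a::comm_ring_1) mpoly" where
  "pvar x = Poly_Mapping.single (Poly_Mapping.single x 1) 1"

definition pconst :: "'a::comm_ring_1 \<Rightarrow> ('v, 'a) mpoly" where
  "pconst c = Poly_Mapping.single 0 c"

definition homogeneous_deg :: "nat \<Rightarrow> ('v, 'a::comm_ring_1) mpoly \<Rightarrow> bool" where
  "homogeneous_deg n p \<longleftrightarrow> (\<forall>m\<in>Poly_Mapping.keys p. (\<Sum>x\<in>Poly_Mapping.keys m. Poly_Mapping.lookup m x) = n)"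

inductive_set ideal_gen :: "'r::comm_ring_1 set \<Rightarrow> 'r set \<Rightarrow> 'r set" for A B where
  zero: "0 \<in> ideal_gen A B"
| step: "r \<in> A \<Longrightarrow> b \<in> B \<Longrightarrow> p \<in> ideal_gen A B \<Longrightarrow> r * b + p \<in> ideal_gen A B"

text \<open>R[G] = K[x_S : S stable]: polynomials only involving variables x_S, S stable.\<close>
definition RG :: "nat \<Rightarrow> (nat \<Rightarrow> nat \<Rightarrow> bool) \<Rightarrow> (nat set, 'a::field) mpoly set" where
  "RG d adj = {p. \<forall>m\<in>Poly_Mapping.keys p. Poly_Mapping.keys m \<subseteq> stable_sets d adj}"

text \<open>The map \<pi> : R[G] \<rightarrow> K[t_1..t_d, s], x_S \<mapsto> s \<prod>_{j\<in>S} t_j;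
the target variable None is s and Some j is t_j.\<close>
definition pi_map :: "(nat set, 'a::field) mpoly \<Rightarrow> (nat option, 'a) mpoly" where
  "pi_map p = (\<Sum>m\<in>Poly_Mapping.keys p. pconst (Poly_Mapping.lookup p m) *
      (\<Prod>S\<in>Poly_Mapping.keys m. (pvar None * (\<Prod>j\<in>S. pvar (Some j))) ^ Poly_Mapping.lookup m S))"

definition I_G :: "nat \<Rightarrow> (nat \<Rightarrow> nat \<Rightarrow> bool) \<Rightarrow> (nat set, 'a::field) mpoly set" where
  "I_G d adj = {p \<in> RG d adj. pi_map p = 0}"

definition I_G2_ideal :: "nat \<Rightarrow> (nat \<Rightarrow> nat \<Rightarrow> bool) \<Rightarrow> (nat set, 'a::field) mpoly set" where
  "I_G2_ideal d adj = ideal_gen (RG d adj) {p \<in> I_G d adj. homogeneous_deg 2 p}"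

definition xcol :: "nat set \<Rightarrow> nat \<Rightarrow> (nat \<Rightarrow> nat) \<Rightarrow> (nat set, 'a::field) mpoly" where
  "xcol W k f = (\<Prod>l\<in>{1..k}. pvar {v\<in>W. f v = l})"

definition J_G :: "nat \<Rightarrow> (nat \<Rightarrow> nat \<Rightarrow> bool) \<Rightarrow> (nat set, 'a::field) mpoly set" where
  "J_G d adj = ideal_gen (RG d adj)
     {xcol W 2 f - xcol W 2 g | W f g. W \<subseteq> {1..d} \<and> is_coloring adj W 2 f \<and> is_coloring adj W 2 g}"

end

theory Submission
  imports Defs "HOL-Library.Multiset"
begin

(*
  (i) \<Longrightarrow> (iii): a Kempe switch of colours i, j changes only the colour classes
  S = f\<^sup>-\<^sup>1(i) and T = f\<^sup>-\<^sup>1(j), so x\<^sub>f - x\<^sub>g = x\<^sub>R (x\<^sub>S x\<^sub>T - x\<^bsub>S'\<^esub> x\<^bsub>T'\<^esub>), and the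
  second factor is the binomial of two 2-colourings of G[S \<union> T].

  (iii) \<Longrightarrow> (ii): such binomials are quadratic and lie in ker \<pi>, because
  \<pi>(x\<^sub>S x\<^sub>T), which is s\<^sup>2 times the product of the t\<^sub>v over S and over T,
  only depends on the disjoint union S \<union> T.

  (ii) \<Longrightarrow> (i): let M be the set of monomials x\<^sub>h of the colourings h reachable
  from f and consider the linear form summing the coefficients on M. It vanishes on
  x\<^sup>m b for every quadratic b \<in> ker \<pi>: the monomials of b fall into fibres of \<pi>
  with coefficient sum zero, and x\<^sup>m x\<^sub>S x\<^sub>T \<in> M only depends on the fibre, since two
  colour classes S, T can be replaced by Kempe switches inside G[S \<union> T] by any stable
  S', T' with the same disjoint union. Hence the form vanishes on x\<^sub>f - x\<^sub>g, which
  forces x\<^sub>g \<in> M. Finally, colourings with the same multiset of colour classes differ by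
  a permutation of the colours, and a transposition of two colours is the switch of all
  components of the corresponding bichromatic subgraph.
*)

section \<open>Coefficient sums, ideals and monomials\<close>

definition coeff_sum :: "'m set \<Rightarrow> ('m \<Rightarrow>\<^sub>0 'a::comm_monoid_add) \<Rightarrow> 'a" where
  "coeff_sum C q = (\<Sum>m\<in>Poly_Mapping.keys q \<inter> C. Poly_Mapping.lookup q m)"

lemma coeff_sum_eq_sum_superset:
  assumes "finite M" "Poly_Mapping.keys q \<subseteq> M"
  shows "coeff_sum C q = (\<Sum>m\<in>M \<inter> C. Poly_Mapping.lookup q m)"
  unfolding coeff_sum_def
  by (rule sum.mono_neutral_left) (use assms in \<open>auto simp: in_keys_iff\<close>)

lemma coeff_sum_zero [simp]: "coeff_sum C 0 = 0"
  by (simp add: coeff_sum_def)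

lemma coeff_sum_add: "coeff_sum C (p + q) = coeff_sum C p + coeff_sum C q"
proof -
  let ?M = "Poly_Mapping.keys p \<union> Poly_Mapping.keys q"
  have "finite ?M" "Poly_Mapping.keys (p + q) \<subseteq> ?M"
    using keys_add[of p q] by auto
  then show ?thesis
    by (simp add: coeff_sum_eq_sum_superset[of ?M] lookup_add sum.distrib)
qed

lemma coeff_sum_diff:
  fixes p q :: "'m \<Rightarrow>\<^sub>0 'a::ab_group_add"
  shows "coeff_sum C (p - q) = coeff_sum C p - coeff_sum C q"
  by (metis coeff_sum_add diff_add_cancel eq_diff_eq)

lemma coeff_sum_sum: "coeff_sum C (sum g A) = (\<Sum>x\<in>A. coeff_sum C (g x))"
  by (induction A rule: infinite_finite_induct) (auto simp: coeff_sum_add)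

lemma coeff_sum_single:
  "coeff_sum C (Poly_Mapping.single m c) = (if m \<in> C then c else 0)"
  by (simp add: coeff_sum_eq_sum_superset[of "{m}"] Int_insert_left)

lemma sum_single_lookup: "(\<Sum>m\<in>Poly_Mapping.keys p. Poly_Mapping.single m (Poly_Mapping.lookup p m)) = p"
  by (rule poly_mapping_eqI) (simp add: lookup_sum lookup_single when_def in_keys_iff)

lemma coeff_sum_single_mult:
  fixes b :: "'m::comm_monoid_add \<Rightarrow>\<^sub>0 'a::comm_semiring_0"
  shows "coeff_sum C (Poly_Mapping.single l c * b) = c * coeff_sum {a. l + a \<in> C} b"
proof -
  have "Poly_Mapping.single l c * b =
      (\<Sum>a\<in>Poly_Mapping.keys b. Poly_Mapping.single (l + a) (c * Poly_Mapping.lookup b a))"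
    by (subst (1) sum_single_lookup[of b, symmetric]) (simp add: sum_distrib_left mult_single)
  then have "coeff_sum C (Poly_Mapping.single l c * b) =
      (\<Sum>a\<in>Poly_Mapping.keys b. if l + a \<in> C then c * Poly_Mapping.lookup b a else 0)"
    by (simp add: coeff_sum_sum coeff_sum_single)
  also have "\<dots> = c * (\<Sum>a\<in>{a\<in>Poly_Mapping.keys b. l + a \<in> C}. Poly_Mapping.lookup b a)"
    unfolding sum_distrib_left sum.inter_filter[OF finite_keys] by (rule sum.cong) auto
  finally show ?thesis
    by (simp add: coeff_sum_def Int_def)
qed

lemma coeff_sum_mult:
  fixes r b :: "'m::comm_monoid_add \<Rightarrow>\<^sub>0 'a::comm_semiring_0"
  assumes "\<And>l. coeff_sum {a. l + a \<in> C} b = 0"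
  shows "coeff_sum C (r * b) = 0"
proof -
  have "r * b = (\<Sum>l\<in>Poly_Mapping.keys r. Poly_Mapping.single l (Poly_Mapping.lookup r l) * b)"
    by (subst (1) sum_single_lookup[of r, symmetric]) (simp add: sum_distrib_right)
  then show ?thesis
    by (simp add: coeff_sum_sum coeff_sum_single_mult assms)
qed

lemma coeff_sum_ideal_gen_eq_0:
  fixes q :: "'m::comm_monoid_add \<Rightarrow>\<^sub>0 'a::comm_ring_1"
  assumes "q \<in> ideal_gen A B"
    and "\<And>b l. b \<in> B \<Longrightarrow> coeff_sum {a. l + a \<in> C} b = 0"
  shows "coeff_sum C q = 0"
  using assms(1) by induction (simp_all add: coeff_sum_add coeff_sum_mult assms(2))

lemma ideal_gen_add:
  assumes "p \<in> ideal_gen A B" "q \<in> ideal_gen A B"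
  shows "p + q \<in> ideal_gen A B"
  using assms(1)
proof induction
  case (step r b p)
  then show ?case
    using ideal_gen.step[OF step.hyps(1,2) step.IH] by (simp add: add.assoc)
qed (simp add: assms(2))

lemma ideal_gen_mono:
  assumes "p \<in> ideal_gen A B" "B \<subseteq> B'"
  shows "p \<in> ideal_gen A B'"
  using assms(1) by induction (use assms(2) in \<open>auto intro: ideal_gen.intros\<close>)

abbreviation monom_degree :: "('v \<Rightarrow>\<^sub>0 nat) \<Rightarrow> nat" where
  "monom_degree m \<equiv> \<Sum>x\<in>Poly_Mapping.keys m. Poly_Mapping.lookup m x"

lemma degree_two_monom_eq_pair:
  assumes "monom_degree m = 2"
  shows "\<exists>S T. m = Poly_Mapping.single S 1 + Poly_Mapping.single T 1"
proof -
  define M where "M = Abs_multiset (Poly_Mapping.lookup m)"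
  have "finite {x. 0 < Poly_Mapping.lookup m x}"
    using finite_keys[of m] by (simp add: in_keys_iff[symmetric] keys.rep_eq)
  then have count_M: "count M = Poly_Mapping.lookup m"
    by (simp add: M_def)
  have "set_mset M = Poly_Mapping.keys m"
    by (auto simp: set_mset_def count_M in_keys_iff)
  then have "size M = Suc (Suc 0)"
    using assms by (simp add: size_multiset_overloaded_eq count_M)
  then obtain S T where "M = {#S, T#}"
    by (auto elim!: size_mset_SucE)
  then have "m = Poly_Mapping.single S 1 + Poly_Mapping.single T 1"
    by (intro poly_mapping_eqI) (simp add: count_M[symmetric] lookup_add lookup_single when_def)
  then show ?thesis
    by blast
qed

lemma keys_single_add_single:
  "Poly_Mapping.keys (Poly_Mapping.single S (1::nat) + Poly_Mapping.single T 1) = {S, T}"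
  by (auto simp: in_keys_iff lookup_add lookup_single when_def split: if_splits)

lemma monom_degree_single_add_single:
  "monom_degree (Poly_Mapping.single S 1 + Poly_Mapping.single T 1) = 2"
  unfolding keys_single_add_single by (cases "S = T") (simp_all add: lookup_add lookup_single)

lemma prod_single_one:
  "(\<Prod>x\<in>A. Poly_Mapping.single (g x) (1::'a::comm_semiring_1)) = Poly_Mapping.single (\<Sum>x\<in>A. g x) 1"
  by (induction A rule: infinite_finite_induct) (auto simp: mult_single)

lemma power_single_one:
  "Poly_Mapping.single e (1::'a::comm_semiring_1) ^ n = Poly_Mapping.single (\<Sum>i<n. e) 1"
  by (induction n) (auto simp: mult_single add.commute)

section \<open>The monomial map \<pi>\<close>

definition pi_monom_var :: "nat set \<Rightarrow> (nat option \<Rightarrow>\<^sub>0 nat)" where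
  "pi_monom_var S = Poly_Mapping.single None 1 + (\<Sum>j\<in>S. Poly_Mapping.single (Some j) 1)"

definition pi_monom :: "(nat set \<Rightarrow>\<^sub>0 nat) \<Rightarrow> (nat option \<Rightarrow>\<^sub>0 nat)" where
  "pi_monom m = (\<Sum>S\<in>Poly_Mapping.keys m. \<Sum>i<Poly_Mapping.lookup m S. pi_monom_var S)"

lemma pi_map_eq_sum:
  "(pi_map p :: (nat option, 'a::field) mpoly) =
     (\<Sum>m\<in>Poly_Mapping.keys p. Poly_Mapping.single (pi_monom m) (Poly_Mapping.lookup p m))"
proof -
  have "(pvar None * (\<Prod>j\<in>S. pvar (Some j)) :: (nat option, 'a) mpoly) =
      Poly_Mapping.single (pi_monom_var S) 1" for S
    by (simp add: pvar_def prod_single_one mult_single pi_monom_var_def)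
  then have "(\<Prod>S\<in>Poly_Mapping.keys m. (pvar None * (\<Prod>j\<in>S. pvar (Some j))) ^ Poly_Mapping.lookup m S
      :: (nat option, 'a) mpoly) = Poly_Mapping.single (pi_monom m) 1" for m
    by (simp add: power_single_one prod_single_one pi_monom_def)
  then show ?thesis
    by (simp add: pi_map_def pconst_def mult_single)
qed

lemma pi_map_eq_sum_superset:
  assumes "finite M" "Poly_Mapping.keys p \<subseteq> M"
  shows "(pi_map p :: (nat option, 'a::field) mpoly) =
     (\<Sum>m\<in>M. Poly_Mapping.single (pi_monom m) (Poly_Mapping.lookup p m))"
  unfolding pi_map_eq_sum
  by (rule sum.mono_neutral_left) (use assms in \<open>auto simp: in_keys_iff\<close>)

lemma pi_map_diff:
  "(pi_map (p - q) :: (nat option, 'a::field) mpoly) = pi_map p - pi_map q"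
proof -
  let ?M = "Poly_Mapping.keys p \<union> Poly_Mapping.keys q"
  have "finite ?M" "Poly_Mapping.keys (p - q) \<subseteq> ?M"
    using keys_diff[of p q] by auto
  then show ?thesis
    by (simp add: pi_map_eq_sum_superset[of ?M] lookup_minus single_diff sum_subtractf)
qed

lemma pi_map_single: "(pi_map (Poly_Mapping.single m c) :: (nat option, 'a::field) mpoly) =
    Poly_Mapping.single (pi_monom m) c"
  by (simp add: pi_map_eq_sum_superset[of "{m}"])

lemma lookup_pi_map:
  "Poly_Mapping.lookup (pi_map p :: (nat option, 'a::field) mpoly) w = coeff_sum {m. pi_monom m = w} p"
  by (simp add: pi_map_eq_sum lookup_sum lookup_single when_def coeff_sum_def sum.inter_filter Int_def)

lemma coeff_sum_eq_0_if_pi_map_eq_0: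
  fixes b :: "(nat set, 'a::field) mpoly"
  assumes "pi_map b = 0"
    and "\<And>a a'. a \<in> Poly_Mapping.keys b \<Longrightarrow> a' \<in> Poly_Mapping.keys b \<Longrightarrow>
      pi_monom a = pi_monom a' \<Longrightarrow> a \<in> C \<Longrightarrow> a' \<in> C"
  shows "coeff_sum C b = 0"
proof -
  let ?A = "Poly_Mapping.keys b \<inter> C"
  have "coeff_sum C b = (\<Sum>w\<in>pi_monom ` ?A. \<Sum>a\<in>{a\<in>?A. pi_monom a = w}. Poly_Mapping.lookup b a)"
    unfolding coeff_sum_def by (rule sum.image_gen) simp
  also have "\<dots> = (\<Sum>w\<in>pi_monom ` ?A. coeff_sum {m. pi_monom m = w} b)"
  proof (intro sum.cong refl)
    fix w
    assume "w \<in> pi_monom ` ?A"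
    then obtain a0 where a0: "a0 \<in> Poly_Mapping.keys b" "a0 \<in> C" "pi_monom a0 = w"
      by blast
    have "{a\<in>?A. pi_monom a = w} = Poly_Mapping.keys b \<inter> {m. pi_monom m = w}"
      using assms(2)[OF a0(1) _ _ a0(2)] a0(3) by auto
    then show "(\<Sum>a\<in>{a\<in>?A. pi_monom a = w}. Poly_Mapping.lookup b a) = coeff_sum {m. pi_monom m = w} b"
      by (simp add: coeff_sum_def)
  qed
  also have "\<dots> = 0"
    using assms(1) by (simp flip: lookup_pi_map)
  finally show ?thesis .
qed

lemma pi_monom_single_add_single:
  "pi_monom (Poly_Mapping.single S 1 + Poly_Mapping.single T 1) = pi_monom_var S + pi_monom_var T"
  unfolding pi_monom_def keys_single_add_single
  by (cases "S = T") (simp_all add: lookup_add lookup_single numeral_2_eq_2)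

lemma lookup_pi_monom_var:
  assumes "finite S"
  shows "Poly_Mapping.lookup (pi_monom_var S) None = 1"
    and "Poly_Mapping.lookup (pi_monom_var S) (Some v) = of_bool (v \<in> S)"
  using assms by (simp_all add: pi_monom_var_def lookup_add lookup_sum lookup_single when_def)

lemma pi_monom_pair_eq_iff:
  assumes "finite S" "finite T" "finite S'" "finite T'"
  shows "pi_monom (Poly_Mapping.single S 1 + Poly_Mapping.single T 1) =
      pi_monom (Poly_Mapping.single S' 1 + Poly_Mapping.single T' 1) \<longleftrightarrow>
    (\<forall>v. of_bool (v \<in> S) + of_bool (v \<in> T) = (of_bool (v \<in> S') + of_bool (v \<in> T') :: nat))"
    (is "?lhs \<longleftrightarrow> ?rhs")
proof
  assume ?lhs
  show ?rhs
  proof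
    fix v
    have "Poly_Mapping.lookup (pi_monom_var S + pi_monom_var T) (Some v) =
        Poly_Mapping.lookup (pi_monom_var S' + pi_monom_var T') (Some v)"
      using \<open>?lhs\<close> unfolding pi_monom_single_add_single by (rule arg_cong)
    then show "of_bool (v \<in> S) + of_bool (v \<in> T) = (of_bool (v \<in> S') + of_bool (v \<in> T') :: nat)"
      using assms by (simp add: lookup_add lookup_pi_monom_var)
  qed
next
  assume ?rhs
  show ?lhs
    unfolding pi_monom_single_add_single
  proof (rule poly_mapping_eqI)
    fix x
    show "Poly_Mapping.lookup (pi_monom_var S + pi_monom_var T) x =
        Poly_Mapping.lookup (pi_monom_var S' + pi_monom_var T') x"
      using \<open>?rhs\<close> assms by (cases x) (simp_all add: lookup_add lookup_pi_monom_var)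
  qed
qed

lemma of_bool_pair_eq_iff:
  assumes "S \<inter> T = {}"
  shows "(\<forall>v. of_bool (v \<in> S) + of_bool (v \<in> T) = (of_bool (v \<in> S') + of_bool (v \<in> T') :: nat))
    \<longleftrightarrow> S' \<union> T' = S \<union> T \<and> S' \<inter> T' = {}"
proof
  assume counts: "\<forall>v. of_bool (v \<in> S) + of_bool (v \<in> T) = (of_bool (v \<in> S') + of_bool (v \<in> T') :: nat)"
  have "(v \<in> S' \<or> v \<in> T') \<longleftrightarrow> (v \<in> S \<or> v \<in> T)" "\<not> (v \<in> S' \<and> v \<in> T')" for v
    using spec[OF counts, of v] assms
    by (cases "v \<in> S"; cases "v \<in> T"; cases "v \<in> S'"; cases "v \<in> T'"; auto simp: disjoint_iff)+
  then show "S' \<union> T' = S \<union> T \<and> S' \<inter> T' = {}"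
    by blast
next
  assume partition: "S' \<union> T' = S \<union> T \<and> S' \<inter> T' = {}"
  show "\<forall>v. of_bool (v \<in> S) + of_bool (v \<in> T) = (of_bool (v \<in> S') + of_bool (v \<in> T') :: nat)"
  proof
    fix v
    have "(v \<in> S' \<or> v \<in> T') \<longleftrightarrow> (v \<in> S \<or> v \<in> T)"
      "\<not> (v \<in> S' \<and> v \<in> T')" "\<not> (v \<in> S \<and> v \<in> T)"
      using partition assms by blast+
    then show "of_bool (v \<in> S) + of_bool (v \<in> T) = (of_bool (v \<in> S') + of_bool (v \<in> T') :: nat)"
      by (cases "v \<in> S"; cases "v \<in> T"; cases "v \<in> S'"; cases "v \<in> T'") simp_all
  qed
qed

section \<open>Kempe changes\<close>

definition color_class :: "nat set \<Rightarrow> (nat \<Rightarrow> nat) \<Rightarrow> nat \<Rightarrow> nat set" where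
  "color_class W h l = {v\<in>W. h v = l}"

definition bicolored :: "nat set \<Rightarrow> (nat \<Rightarrow> nat) \<Rightarrow> nat \<Rightarrow> nat \<Rightarrow> nat set" where
  "bicolored W h i j = {v\<in>W. h v = i \<or> h v = j}"

definition swap_on :: "nat set \<Rightarrow> nat \<Rightarrow> nat \<Rightarrow> (nat \<Rightarrow> nat) \<Rightarrow> nat \<Rightarrow> nat" where
  "swap_on D i j h v = (if v \<in> D then swap_colors i j (h v) else h v)"

(* A union of connected components of the subgraph induced on V. *)
definition adj_closed :: "(nat \<Rightarrow> nat \<Rightarrow> bool) \<Rightarrow> nat set \<Rightarrow> nat set \<Rightarrow> bool" where
  "adj_closed adj V D \<longleftrightarrow> D \<subseteq> V \<and> (\<forall>x\<in>D. \<forall>y\<in>V. adj x y \<longrightarrow> y \<in> D)"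

lemma is_coloring_adj_neq:
  "is_coloring adj W k h \<Longrightarrow> u \<in> W \<Longrightarrow> v \<in> W \<Longrightarrow> adj u v \<Longrightarrow> h u \<noteq> h v"
  by (simp add: is_coloring_def)

lemma swap_colors_commute: "swap_colors i j = swap_colors j i"
  by (auto simp: swap_colors_def)

lemma bij_betw_swap_colors: "i \<in> K \<Longrightarrow> j \<in> K \<Longrightarrow> bij_betw (swap_colors i j) K K"
  by (rule bij_betw_byWitness[where f' = "swap_colors i j"]) (auto simp: swap_colors_def)

lemma is_coloring_swap_on:
  assumes "symp adj" "is_coloring adj W k h" "i \<in> {1..k}" "j \<in> {1..k}"
    and "adj_closed adj (bicolored W h i j) D"
  shows "is_coloring adj W k (swap_on D i j h)"
  unfolding is_coloring_def
proof (intro conjI ballI impI)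
  have D: "D \<subseteq> bicolored W h i j"
    "\<And>x y. x \<in> D \<Longrightarrow> y \<in> bicolored W h i j \<Longrightarrow> adj x y \<Longrightarrow> y \<in> D"
    using assms(5) by (auto simp: adj_closed_def)
  fix u v
  assume "u \<in> W"
  then show "swap_on D i j h u \<in> {1..k}"
    using assms(2-4) D(1) by (auto simp: is_coloring_def swap_on_def swap_colors_def bicolored_def)
  assume "v \<in> W" "adj u v"
  then have "h u \<noteq> h v" "adj v u"
    using assms(1,2) \<open>u \<in> W\<close> by (auto simp: is_coloring_def dest: sympD)
  moreover have "u \<in> D \<longleftrightarrow> v \<in> D" if "h u \<in> {i, j}" "h v \<in> {i, j}"
    using that D(2) \<open>u \<in> W\<close> \<open>v \<in> W\<close> \<open>adj u v\<close> \<open>adj v u\<close> by (auto simp: bicolored_def)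
  ultimately show "swap_on D i j h u \<noteq> swap_on D i j h v"
    using D(1) by (auto simp: swap_on_def swap_colors_def bicolored_def)
qed

lemma bicolored_swap_on:
  "D \<subseteq> bicolored W h i j \<Longrightarrow> bicolored W (swap_on D i j h) i j = bicolored W h i j"
  by (auto simp: bicolored_def swap_on_def swap_colors_def)

lemma color_class_swap_on_other:
  "D \<subseteq> bicolored W h i j \<Longrightarrow> l \<noteq> i \<Longrightarrow> l \<noteq> j \<Longrightarrow>
    color_class W (swap_on D i j h) l = color_class W h l"
  by (auto simp: color_class_def bicolored_def swap_on_def swap_colors_def)

lemma color_class_swap_on_bicolored:
  "color_class W (swap_on (bicolored W h i j) i j h) l = color_class W h (swap_colors i j l)"
  by (auto simp: color_class_def bicolored_def swap_on_def swap_colors_def)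

lemma component_of_subset: "u \<in> V \<Longrightarrow> component_of adj V u \<subseteq> V"
  by (auto simp: component_of_def elim: rtranclp.cases)

lemma self_in_component_of: "u \<in> component_of adj V u"
  by (simp add: component_of_def)

lemma adj_closed_component_of: "u \<in> V \<Longrightarrow> adj_closed adj V (component_of adj V u)"
  by (auto simp: adj_closed_def component_of_def elim: rtranclp.cases intro: rtranclp.rtrancl_into_rtrancl)

lemma component_of_subset_adj_closed:
  assumes "adj_closed adj V D" "u \<in> D"
  shows "component_of adj V u \<subseteq> D"
proof
  fix v
  assume "v \<in> component_of adj V u"
  then have "(\<lambda>a b. a \<in> V \<and> b \<in> V \<and> adj a b)\<^sup>*\<^sup>* u v"
    by (simp add: component_of_def)
  then show "v \<in> D"
    using assms by induction (auto simp: adj_closed_def)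
qed

lemma adj_closed_diff:
  "symp adj \<Longrightarrow> adj_closed adj V D \<Longrightarrow> adj_closed adj V C \<Longrightarrow> adj_closed adj V (D - C)"
  unfolding adj_closed_def by (blast dest: sympD)

lemma kempe_step_swap_component:
  assumes "symp adj" "is_coloring adj W k h" "i \<in> {1..k}" "j \<in> {1..k}" "i \<noteq> j"
    and "u \<in> bicolored W h i j"
  shows "kempe_step adj W k h (swap_on (component_of adj (bicolored W h i j) u) i j h)"
proof -
  let ?C = "component_of adj (bicolored W h i j) u"
  define a b where "a = min i j" and "b = max i j"
  have ab: "bicolored W h a b = bicolored W h i j" "swap_colors a b = swap_colors i j"
    unfolding a_def b_def by (cases "i < j"; auto simp: bicolored_def swap_colors_commute)+
  have "is_coloring adj W k (swap_on ?C i j h)"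
    using assms by (intro is_coloring_swap_on adj_closed_component_of)
  moreover have "1 \<le> a" "a < b" "b \<le> k"
    using assms(3-5) by (auto simp: a_def b_def)
  moreover have "u \<in> bicolored W h a b" "\<forall>v. swap_on ?C i j h v =
      (if v \<in> component_of adj (bicolored W h a b) u then swap_colors a b (h v) else h v)"
    using assms(6) by (simp_all add: ab swap_on_def)
  ultimately show ?thesis
    using assms(2) unfolding kempe_step_def Let_def bicolored_def by blast
qed

lemma kempe_reach_is_coloring:
  "(kempe_step adj W k)\<^sup>*\<^sup>* f h \<Longrightarrow> is_coloring adj W k f \<Longrightarrow> is_coloring adj W k h"
  by (induction rule: rtranclp_induct) (auto simp: kempe_step_def)

lemma swap_on_empty [simp]: "swap_on {} i j h = h"
  by (simp add: fun_eq_iff swap_on_def)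

lemma kempe_reach_swap_on:
  assumes "symp adj" "finite W" "i \<in> {1..k}" "j \<in> {1..k}" "i \<noteq> j"
    and "is_coloring adj W k h" "adj_closed adj (bicolored W h i j) D"
  shows "(kempe_step adj W k)\<^sup>*\<^sup>* h (swap_on D i j h)"
  using assms(6,7)
proof (induction "card D" arbitrary: h D rule: less_induct)
  case less
  show ?case
  proof (cases "D = {}")
    case True
    then show ?thesis by simp
  next
    case False
    then obtain u where "u \<in> D" by blast
    let ?V = "bicolored W h i j"
    let ?C = "component_of adj ?V u"
    let ?h1 = "swap_on ?C i j h"
    have "D \<subseteq> ?V"
      using less.prems(2) by (simp add: adj_closed_def)
    moreover have "?V \<subseteq> W"
      by (auto simp: bicolored_def)
    ultimately have u: "u \<in> ?V" and "finite D"
      using \<open>u \<in> D\<close> assms(2) by (auto intro: finite_subset)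
    have step: "kempe_step adj W k h ?h1"
      using assms(1) less.prems(1) assms(3-5) u by (rule kempe_step_swap_component)
    have closed_C: "adj_closed adj ?V ?C"
      using u by (rule adj_closed_component_of)
    have "?C \<subseteq> D"
      using less.prems(2) \<open>u \<in> D\<close> by (rule component_of_subset_adj_closed)
    have "bicolored W ?h1 i j = ?V"
      using closed_C by (intro bicolored_swap_on) (simp add: adj_closed_def)
    then have closed_rest: "adj_closed adj (bicolored W ?h1 i j) (D - ?C)"
      using adj_closed_diff[OF assms(1) less.prems(2) closed_C] by simp
    have smaller: "card (D - ?C) < card D"
      using \<open>finite D\<close> \<open>u \<in> D\<close> self_in_component_of[of u adj ?V] by (intro psubset_card_mono) auto
    have "is_coloring adj W k ?h1"
      using step by (simp add: kempe_step_def)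
    then have "(kempe_step adj W k)\<^sup>*\<^sup>* ?h1 (swap_on (D - ?C) i j ?h1)"
      using less.hyps[OF smaller _ closed_rest] by blast
    moreover have "swap_on (D - ?C) i j ?h1 = swap_on D i j h"
      using \<open>?C \<subseteq> D\<close> by (auto simp: swap_on_def fun_eq_iff)
    ultimately show ?thesis
      using step by (simp add: converse_rtranclp_into_rtranclp)
  qed
qed

section \<open>Colouring monomials\<close>

definition color_monom :: "nat set \<Rightarrow> nat set \<Rightarrow> (nat \<Rightarrow> nat) \<Rightarrow> (nat set \<Rightarrow>\<^sub>0 nat)" where
  "color_monom W K h = (\<Sum>l\<in>K. Poly_Mapping.single (color_class W h l) 1)"

lemma xcol_eq_single: "xcol W k h = Poly_Mapping.single (color_monom W {1..k} h) 1"
  unfolding xcol_def color_monom_def pvar_def color_class_def by (rule prod_single_one)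

lemma xcol_cong:
  assumes "\<forall>v\<in>W. h v = g v"
  shows "xcol W k h = xcol W k g"
proof -
  have "{v\<in>W. h v = l} = {v\<in>W. g v = l}" for l
    using assms by auto
  then show ?thesis
    unfolding xcol_def by (simp only:)
qed

lemma keys_color_monom:
  assumes "finite K"
  shows "Poly_Mapping.keys (color_monom W K h) = color_class W h ` K"
  using assms by (auto simp: color_monom_def in_keys_iff lookup_sum lookup_single when_def split: if_splits)

lemma color_monom_remove:
  "finite K \<Longrightarrow> i \<in> K \<Longrightarrow>
    color_monom W K h = Poly_Mapping.single (color_class W h i) 1 + color_monom W (K - {i}) h"
  unfolding color_monom_def by (rule sum.remove)

lemma color_monom_cong:
  "(\<And>l. l \<in> K \<Longrightarrow> color_class W h l = color_class W g l) \<Longrightarrow> color_monom W K h = color_monom W K g"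
  unfolding color_monom_def by simp

lemma color_monom_swap_on_bicolored:
  "i \<in> K \<Longrightarrow> j \<in> K \<Longrightarrow> color_monom W K (swap_on (bicolored W h i j) i j h) = color_monom W K h"
  unfolding color_monom_def color_class_swap_on_bicolored
  by (rule sum.reindex_bij_betw[OF bij_betw_swap_colors])

lemma color_monom_split_pair:
  assumes "finite K" "i \<in> K" "j \<in> K" "i \<noteq> j"
  shows "color_monom W K h = Poly_Mapping.single (color_class W h i) 1 +
    Poly_Mapping.single (color_class W h j) 1 + color_monom W (K - {i} - {j}) h"
  using color_monom_remove[of K i W h] color_monom_remove[of "K - {i}" j W h] assms
  by (simp add: add.assoc)

lemma color_class_of_vertex_eq:
  assumes "finite K" "color_monom W K h = color_monom W K g" "v \<in> W" "g v \<in> K"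
  shows "color_class W h (h v) = color_class W g (g v)"
proof -
  have "color_class W g (g v) \<in> color_class W h ` K"
    using assms by (metis imageI keys_color_monom)
  then obtain l where "color_class W h l = color_class W g (g v)"
    by blast
  moreover have "h v = l"
    using calculation assms(3) by (auto simp: color_class_def)
  ultimately show ?thesis
    by simp
qed

lemma kempe_reach_if_color_monom_eq:
  assumes "symp adj" "finite W" "is_coloring adj W k g"
    and "is_coloring adj W k h" "color_monom W {1..k} h = color_monom W {1..k} g"
  shows "\<exists>h'. (kempe_step adj W k)\<^sup>*\<^sup>* h h' \<and> (\<forall>v\<in>W. h' v = g v)"
  using assms(4,5)
proof (induction "card {l\<in>{1..k}. color_class W h l \<noteq> color_class W g l}" arbitrary: h rule: less_induct)
  case less
  let ?wrong = "\<lambda>h. {l\<in>{1..k}. color_class W h l \<noteq> color_class W g l}"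
  show ?case
  proof (cases "\<forall>v\<in>W. h v = g v")
    case True
    then show ?thesis by blast
  next
    case False
    then obtain v where v: "v \<in> W" "h v \<noteq> g v" by blast
    define i j where "i = h v" and "j = g v"
    have ij: "i \<in> {1..k}" "j \<in> {1..k}" "i \<noteq> j"
      using less.prems(1) assms(3) v by (auto simp: is_coloring_def i_def j_def)
    have class_i: "color_class W h i = color_class W g j"
      using color_class_of_vertex_eq[of "{1..k}" W h g v] less.prems(2) v(1) ij(2)
      by (simp add: i_def j_def)
    define h2 where "h2 = swap_on (bicolored W h i j) i j h"
    have reach: "(kempe_step adj W k)\<^sup>*\<^sup>* h h2"
      unfolding h2_def
      using assms(1,2) ij less.prems(1) by (rule kempe_reach_swap_on) (simp add: adj_closed_def)
    have "color_class W g i \<noteq> color_class W g j"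
      using v by (auto simp: color_class_def i_def j_def)
    then have "?wrong h2 \<subseteq> ?wrong h - {j}"
      using class_i ij by (auto simp: h2_def color_class_swap_on_bicolored swap_colors_def)
    moreover have "j \<in> ?wrong h"
      using ij v by (auto simp: color_class_def i_def j_def)
    ultimately have "?wrong h2 \<subset> ?wrong h"
      by blast
    then have "card (?wrong h2) < card (?wrong h)"
      by (rule psubset_card_mono[rotated]) simp
    moreover have "is_coloring adj W k h2"
      using reach less.prems(1) by (rule kempe_reach_is_coloring)
    moreover have "color_monom W {1..k} h2 = color_monom W {1..k} g"
      using ij less.prems(2) by (simp add: h2_def color_monom_swap_on_bicolored)
    ultimately obtain h' where "(kempe_step adj W k)\<^sup>*\<^sup>* h2 h'" "\<forall>v\<in>W. h' v = g v"
      using less.hyps by blast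
    then show ?thesis
      using reach by (meson rtranclp_trans)
  qed
qed

lemma kempe_reach_replace_pair:
  assumes "symp adj" "finite W" "is_coloring adj W k h" "i \<in> {1..k}" "j \<in> {1..k}" "i \<noteq> j"
    and "S' \<union> T' = color_class W h i \<union> color_class W h j" "S' \<inter> T' = {}"
    and "\<forall>u\<in>S'. \<forall>v\<in>S'. \<not> adj u v" "\<forall>u\<in>T'. \<forall>v\<in>T'. \<not> adj u v"
  shows "\<exists>h'. (kempe_step adj W k)\<^sup>*\<^sup>* h h' \<and> color_class W h' i = S' \<and> color_class W h' j = T' \<and>
    (\<forall>l. l \<noteq> i \<longrightarrow> l \<noteq> j \<longrightarrow> color_class W h' l = color_class W h l)"
proof -
  have new: "(v \<in> S' \<or> v \<in> T') \<longleftrightarrow> v \<in> W \<and> (h v = i \<or> h v = j)"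
    "\<not> (v \<in> S' \<and> v \<in> T')" for v
    using assms(7,8) by (auto simp: color_class_def set_eq_iff)
  define D where "D = {v\<in>W. h v = i \<and> v \<in> T' \<or> h v = j \<and> v \<in> S'}"
  have D_sub: "D \<subseteq> bicolored W h i j"
    by (auto simp: D_def bicolored_def)
  have "adj_closed adj (bicolored W h i j) D"
    unfolding adj_closed_def
  proof (intro conjI ballI impI D_sub)
    fix x y
    assume "x \<in> D" "y \<in> bicolored W h i j" "adj x y"
    then have x: "x \<in> W" "h x = i \<and> x \<in> T' \<or> h x = j \<and> x \<in> S'"
      and y: "y \<in> W" "h y = i \<or> h y = j"
      by (auto simp: D_def bicolored_def)
    have "h x \<noteq> h y"
      using assms(3) x(1) y(1) \<open>adj x y\<close> by (auto simp: is_coloring_def)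
    moreover have "y \<in> S' \<or> y \<in> T'"
      using new(1)[of y] y by blast
    ultimately show "y \<in> D"
      using x y \<open>adj x y\<close> assms(9,10) by (auto simp: D_def)
  qed
  then have "(kempe_step adj W k)\<^sup>*\<^sup>* h (swap_on D i j h)"
    using assms(1-6) by (intro kempe_reach_swap_on)
  moreover have "color_class W (swap_on D i j h) i = S'" "color_class W (swap_on D i j h) j = T'"
    using new assms(6) by (auto simp: D_def color_class_def swap_on_def swap_colors_def)
  moreover have "\<forall>l. l \<noteq> i \<longrightarrow> l \<noteq> j \<longrightarrow> color_class W (swap_on D i j h) l = color_class W h l"
    using D_sub color_class_swap_on_other by blast
  ultimately show ?thesis
    by blast
qed

lemma color_monom_eq_add_pair:
  assumes "finite K" "color_monom W K h = m + Poly_Mapping.single S 1 + Poly_Mapping.single T 1"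
  shows "\<exists>i\<in>K. \<exists>j\<in>K. i \<noteq> j \<and> color_class W h i = S \<and> color_class W h j = T \<and>
    color_monom W (K - {i} - {j}) h = m"
proof -
  have "S \<in> Poly_Mapping.keys (color_monom W K h)"
    unfolding assms(2) by (simp add: in_keys_iff lookup_add)
  then obtain i where i: "i \<in> K" "color_class W h i = S"
    using assms(1) by (auto simp: keys_color_monom)
  have "Poly_Mapping.single S 1 + color_monom W (K - {i}) h = color_monom W K h"
    using color_monom_remove[of K i W h] assms(1) i by simp
  also have "\<dots> = Poly_Mapping.single S 1 + (m + Poly_Mapping.single T 1)"
    using assms(2) by (simp add: ac_simps)
  finally have rest_i: "color_monom W (K - {i}) h = m + Poly_Mapping.single T 1"
    by (simp only: add_left_cancel)
  then have "T \<in> Poly_Mapping.keys (color_monom W (K - {i}) h)"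
    by (simp add: in_keys_iff lookup_add)
  then have "T \<in> color_class W h ` (K - {i})"
    using keys_color_monom[of "K - {i}" W h] assms(1) by simp
  then obtain j where j: "j \<in> K" "j \<noteq> i" "color_class W h j = T"
    by blast
  have "Poly_Mapping.single T 1 + color_monom W (K - {i} - {j}) h = color_monom W (K - {i}) h"
    using color_monom_remove[of "K - {i}" j W h] assms(1) j by simp
  also have "\<dots> = Poly_Mapping.single T 1 + m"
    using rest_i by (simp add: ac_simps)
  finally have "color_monom W (K - {i} - {j}) h = m"
    by (simp only: add_left_cancel)
  with i j show ?thesis
    by (intro bexI[of _ i] bexI[of _ j]) auto
qed

lemma kempe_reach_color_monom_replace_pair:
  assumes "symp adj" "finite W" "is_coloring adj W k h"
    and "color_monom W {1..k} h = m + Poly_Mapping.single S 1 + Poly_Mapping.single T 1"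
    and "\<forall>u\<in>S'. \<forall>v\<in>S'. \<not> adj u v" "\<forall>u\<in>T'. \<forall>v\<in>T'. \<not> adj u v"
    and "\<forall>v. of_bool (v \<in> S) + of_bool (v \<in> T) = (of_bool (v \<in> S') + of_bool (v \<in> T') :: nat)"
  shows "\<exists>h'. (kempe_step adj W k)\<^sup>*\<^sup>* h h' \<and>
    color_monom W {1..k} h' = m + Poly_Mapping.single S' 1 + Poly_Mapping.single T' 1"
proof -
  let ?K = "{1..k}"
  obtain i j where i: "i \<in> ?K" "color_class W h i = S" and j: "j \<in> ?K" "j \<noteq> i" "color_class W h j = T"
    and rest_ij: "color_monom W (?K - {i} - {j}) h = m"
    using color_monom_eq_add_pair[OF finite_atLeastAtMost assms(4)] by blast
  have "S \<inter> T = {}"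
    using i j by (auto simp: color_class_def)
  then have "S' \<union> T' = S \<union> T \<and> S' \<inter> T' = {}"
    using assms(7) by (simp add: of_bool_pair_eq_iff)
  then have "S' \<union> T' = color_class W h i \<union> color_class W h j" "S' \<inter> T' = {}"
    using i(2) j(3) by simp_all
  then obtain h' where h': "(kempe_step adj W k)\<^sup>*\<^sup>* h h'"
    "color_class W h' i = S'" "color_class W h' j = T'"
    "\<And>l. l \<noteq> i \<Longrightarrow> l \<noteq> j \<Longrightarrow> color_class W h' l = color_class W h l"
    using kempe_reach_replace_pair[OF assms(1-3) i(1) j(1) j(2)[symmetric] _ _ assms(5,6)] by blast
  have "color_monom W (?K - {i} - {j}) h' = m"
    using rest_ij h'(4) color_monom_cong[of "?K - {i} - {j}" W h' h] by simp
  then have "color_monom W ?K h' = m + Poly_Mapping.single S' 1 + Poly_Mapping.single T' 1"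
    using color_monom_split_pair[of ?K i j W h'] i(1) j h'(2,3) by (simp add: ac_simps)
  then show ?thesis
    using h'(1) by blast
qed

lemma color_monom_two_colors:
  "color_monom W {1..2} h = Poly_Mapping.single (color_class W h 1) 1 + Poly_Mapping.single (color_class W h 2) 1"
proof -
  have "{1..2::nat} = {1, 2}"
    by auto
  then show ?thesis
    by (simp add: color_monom_def)
qed

lemma keys_color_monom_subset_stable_sets:
  assumes "is_coloring adj W k h" "W \<subseteq> {1..d}"
  shows "Poly_Mapping.keys (color_monom W K h) \<subseteq> stable_sets d adj"
proof -
  have "color_class W h l \<in> stable_sets d adj" for l
    using assms by (auto simp: stable_sets_def color_class_def dest: is_coloring_adj_neq)
  then show ?thesis
    unfolding color_monom_def by (intro order_trans[OF keys_sum]) auto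
qed

lemma single_color_monom_in_RG:
  "is_coloring adj W k h \<Longrightarrow> W \<subseteq> {1..d} \<Longrightarrow>
    (Poly_Mapping.single (color_monom W K h) c :: (nat set, 'a::field) mpoly) \<in> RG d adj"
  using keys_color_monom_subset_stable_sets by (fastforce simp: RG_def)

lemma is_coloring_bicolored_two_colors:
  assumes "is_coloring adj W k h"
  shows "is_coloring adj (bicolored W h i j) 2 (\<lambda>v. if h v = i then 1 else 2)"
  unfolding is_coloring_def
proof (intro conjI ballI impI)
  fix u v
  assume "u \<in> bicolored W h i j" "v \<in> bicolored W h i j" "adj u v"
  moreover from this have "h u \<noteq> h v"
    using assms by (auto simp: bicolored_def dest: is_coloring_adj_neq)
  ultimately show "(if h u = i then 1 else 2) \<noteq> (if h v = i then 1 else (2::nat))"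
    by (auto simp: bicolored_def)
qed simp

lemma color_monom_bicolored_two_colors:
  assumes "i \<noteq> j"
  shows "color_monom (bicolored W h i j) {1..2} (\<lambda>v. if h v = i then 1 else 2) =
    Poly_Mapping.single (color_class W h i) 1 + Poly_Mapping.single (color_class W h j) 1"
proof -
  have "color_class (bicolored W h i j) (\<lambda>v. if h v = i then 1 else 2) 1 = color_class W h i"
    "color_class (bicolored W h i j) (\<lambda>v. if h v = i then 1 else 2) 2 = color_class W h j"
    using assms by (auto simp: color_class_def bicolored_def)
  then show ?thesis
    unfolding color_monom_two_colors by (simp only:)
qed

section \<open>Kempe equivalence and the two ideals\<close>

lemma xcol_diff_in_J_G:
  assumes "W \<subseteq> {1..d}" "is_coloring adj W k h" "is_coloring adj W k h'"
    and "i \<in> {1..k}" "j \<in> {1..k}" "i \<noteq> j"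
    and "bicolored W h' i j = bicolored W h i j"
    and "\<And>l. l \<noteq> i \<Longrightarrow> l \<noteq> j \<Longrightarrow> color_class W h' l = color_class W h l"
  shows "(xcol W k h - xcol W k h' :: (nat set, 'a::field) mpoly) \<in> J_G d adj"
proof -
  let ?V = "bicolored W h i j"
  let ?two = "\<lambda>h v. if h v = i then 1 else (2::nat)"
  define R where "R = color_monom W ({1..k} - {i} - {j}) h"
  define b :: "(nat set, 'a) mpoly" where "b = xcol ?V 2 (?two h) - xcol ?V 2 (?two h')"
  have "?V \<subseteq> {1..d}"
    using assms(1) by (auto simp: bicolored_def)
  moreover have "is_coloring adj ?V 2 (?two h)" "is_coloring adj ?V 2 (?two h')"
    using is_coloring_bicolored_two_colors[OF assms(2), of i j]
      is_coloring_bicolored_two_colors[OF assms(3), of i j] assms(7) by simp_all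
  ultimately have generator:
    "b \<in> {xcol W 2 f - xcol W 2 g | W f g. W \<subseteq> {1..d} \<and> is_coloring adj W 2 f \<and> is_coloring adj W 2 g}"
    unfolding mem_Collect_eq b_def by (intro exI[of _ ?V] exI[of _ "?two h"] exI[of _ "?two h'"] conjI refl)
  have split: "color_monom W {1..k} g =
      color_monom (bicolored W g i j) {1..2} (?two g) + color_monom W ({1..k} - {i} - {j}) g" for g
    unfolding color_monom_bicolored_two_colors[OF assms(6)]
    using color_monom_split_pair[of "{1..k}" i j W g] assms(4-6) by simp
  have "color_monom W ({1..k} - {i} - {j}) h' = R"
    unfolding R_def using assms(8) by (intro color_monom_cong) auto
  then have "xcol W k h - xcol W k h' = Poly_Mapping.single R 1 * b"
    unfolding b_def xcol_eq_single split[of h] split[of h'] assms(7) R_def[symmetric]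
    by (simp add: mult_single right_diff_distrib add.commute)
  moreover have "Poly_Mapping.single R 1 \<in> RG d adj"
    unfolding R_def using assms(2,1) by (rule single_color_monom_in_RG)
  ultimately show ?thesis
    unfolding J_G_def using ideal_gen.step[OF _ generator ideal_gen.zero] by simp
qed

lemma kempe_step_xcol_diff_in_J_G:
  assumes "W \<subseteq> {1..d}" "kempe_step adj W k h h'"
  shows "(xcol W k h - xcol W k h' :: (nat set, 'a::field) mpoly) \<in> J_G d adj"
proof -
  obtain i j u where ij: "1 \<le> i" "i < j" "j \<le> k" and u: "u \<in> bicolored W h i j"
    and h': "\<forall>v. h' v = swap_on (component_of adj (bicolored W h i j) u) i j h v"
    using assms(2) unfolding kempe_step_def Let_def swap_on_def bicolored_def by blast
  let ?C = "component_of adj (bicolored W h i j) u"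
  have h'_eq: "h' = swap_on ?C i j h"
    using h' by blast
  have C_sub: "?C \<subseteq> bicolored W h i j"
    using u by (rule component_of_subset)
  show ?thesis
  proof (rule xcol_diff_in_J_G[where i = i and j = j])
    show "bicolored W h' i j = bicolored W h i j"
      unfolding h'_eq using C_sub by (rule bicolored_swap_on)
    show "color_class W h' l = color_class W h l" if "l \<noteq> i" "l \<noteq> j" for l
      unfolding h'_eq using C_sub that by (rule color_class_swap_on_other)
  qed (use assms ij in \<open>auto simp: kempe_step_def\<close>)
qed

lemma kempe_equiv_imp_xcol_diff_in_J_G:
  assumes "W \<subseteq> {1..d}" "kempe_equiv adj W k f g"
  shows "(xcol W k f - xcol W k g :: (nat set, 'a::field) mpoly) \<in> J_G d adj"
proof -
  obtain h where reach: "(kempe_step adj W k)\<^sup>*\<^sup>* f h" and agree: "\<forall>v\<in>W. h v = g v"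
    using assms(2) by (auto simp: kempe_equiv_def)
  from agree have "xcol W k h = (xcol W k g :: (nat set, 'a) mpoly)"
    by (rule xcol_cong)
  moreover have "(xcol W k f - xcol W k h :: (nat set, 'a) mpoly) \<in> J_G d adj"
    using reach
  proof (induction rule: rtranclp_induct)
    case base
    then show ?case
      by (simp add: J_G_def ideal_gen.zero)
  next
    case (step h h')
    have "(xcol W k h - xcol W k h' :: (nat set, 'a) mpoly) \<in> J_G d adj"
      using assms(1) step.hyps(2) by (rule kempe_step_xcol_diff_in_J_G)
    with step.IH have "(xcol W k f - xcol W k h) + (xcol W k h - xcol W k h' :: (nat set, 'a) mpoly) \<in> J_G d adj"
      unfolding J_G_def by (rule ideal_gen_add)
    then show ?case
      by simp
  qed
  ultimately show ?thesis
    by simp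
qed

lemma pi_monom_two_colorings_eq:
  assumes "finite W" "is_coloring adj W 2 f" "is_coloring adj W 2 g"
  shows "pi_monom (color_monom W {1..2} f) = pi_monom (color_monom W {1..2} g)"
proof -
  have classes: "color_class W h 1 \<inter> color_class W h 2 = {}"
    "color_class W h 1 \<union> color_class W h 2 = W"
    "finite (color_class W h 1)" "finite (color_class W h 2)"
    if "is_coloring adj W 2 h" for h
    using that assms(1) by (auto simp: color_class_def is_coloring_def)
  show ?thesis
    unfolding color_monom_two_colors
    using classes[OF assms(2)] classes[OF assms(3)]
    by (subst pi_monom_pair_eq_iff) (simp_all add: of_bool_pair_eq_iff)
qed

lemma two_coloring_binomial_in_I_G:
  assumes "W \<subseteq> {1..d}" "is_coloring adj W 2 f" "is_coloring adj W 2 g"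
  shows "(xcol W 2 f - xcol W 2 g :: (nat set, 'a::field) mpoly) \<in> {p \<in> I_G d adj. homogeneous_deg 2 p}"
proof -
  let ?m = "\<lambda>h. color_monom W {1..2} h"
  let ?p = "Poly_Mapping.single (?m f) 1 - Poly_Mapping.single (?m g) (1::'a)"
  have keys_p: "Poly_Mapping.keys ?p \<subseteq> {?m f, ?m g}"
    using keys_diff[of "Poly_Mapping.single (?m f) (1::'a)" "Poly_Mapping.single (?m g) 1"] by auto
  have "?p \<in> RG d adj"
    unfolding RG_def
  proof (intro CollectI ballI)
    fix m
    assume "m \<in> Poly_Mapping.keys ?p"
    then have "m = ?m f \<or> m = ?m g"
      using keys_p by blast
    then show "Poly_Mapping.keys m \<subseteq> stable_sets d adj"
      using keys_color_monom_subset_stable_sets[OF assms(2,1)]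
        keys_color_monom_subset_stable_sets[OF assms(3,1)] by blast
  qed
  moreover have "homogeneous_deg 2 ?p"
  proof -
    have "monom_degree (?m h) = 2" for h
      unfolding color_monom_two_colors by (rule monom_degree_single_add_single)
    then show ?thesis
      using keys_p by (auto simp: homogeneous_deg_def)
  qed
  moreover have "pi_map ?p = 0"
    using pi_monom_two_colorings_eq[OF finite_subset[OF assms(1) finite_atLeastAtMost] assms(2,3)]
    by (simp add: pi_map_diff pi_map_single)
  ultimately show ?thesis
    by (simp add: I_G_def xcol_eq_single)
qed

lemma J_G_subset_I_G2_ideal: "(J_G d adj :: (nat set, 'a::field) mpoly set) \<subseteq> I_G2_ideal d adj"
proof
  fix q :: "(nat set, 'a) mpoly"
  assume "q \<in> J_G d adj"
  then show "q \<in> I_G2_ideal d adj"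
    unfolding J_G_def I_G2_ideal_def
    by (rule ideal_gen_mono) (use two_coloring_binomial_in_I_G in blast)
qed

definition kempe_monoms ::
    "(nat \<Rightarrow> nat \<Rightarrow> bool) \<Rightarrow> nat set \<Rightarrow> nat \<Rightarrow> (nat \<Rightarrow> nat) \<Rightarrow> (nat set \<Rightarrow>\<^sub>0 nat) set" where
  "kempe_monoms adj W k f = {color_monom W {1..k} h | h. (kempe_step adj W k)\<^sup>*\<^sup>* f h}"

lemma kempe_monoms_exchange:
  fixes b :: "(nat set, 'a::field) mpoly"
  assumes "symp adj" "finite W" "is_coloring adj W k f"
    and "b \<in> RG d adj" "homogeneous_deg 2 b"
    and "a \<in> Poly_Mapping.keys b" "a' \<in> Poly_Mapping.keys b" "pi_monom a = pi_monom a'"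
    and "m + a \<in> kempe_monoms adj W k f"
  shows "m + a' \<in> kempe_monoms adj W k f"
proof -
  have "monom_degree a = 2" "monom_degree a' = 2"
    using assms(5-7) by (simp_all add: homogeneous_deg_def)
  then obtain S T S' T' where a: "a = Poly_Mapping.single S 1 + Poly_Mapping.single T 1"
    and a': "a' = Poly_Mapping.single S' 1 + Poly_Mapping.single T' 1"
    by (metis degree_two_monom_eq_pair)
  have "Poly_Mapping.keys a \<subseteq> stable_sets d adj" "Poly_Mapping.keys a' \<subseteq> stable_sets d adj"
    using assms(4,6,7) by (auto simp: RG_def)
  then have "S \<in> stable_sets d adj" "T \<in> stable_sets d adj" "S' \<in> stable_sets d adj" "T' \<in> stable_sets d adj"
    unfolding a a' keys_single_add_single by auto
  then have fin: "finite S" "finite T" "finite S'" "finite T'"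
    and stable': "\<forall>u\<in>S'. \<forall>v\<in>S'. \<not> adj u v" "\<forall>u\<in>T'. \<forall>v\<in>T'. \<not> adj u v"
    by (auto simp: stable_sets_def intro: finite_subset)
  have counts: "\<forall>v. of_bool (v \<in> S) + of_bool (v \<in> T) = (of_bool (v \<in> S') + of_bool (v \<in> T') :: nat)"
    using assms(8) pi_monom_pair_eq_iff[OF fin] by (simp add: a a')
  obtain h where reach: "(kempe_step adj W k)\<^sup>*\<^sup>* f h"
    and monom_h: "color_monom W {1..k} h = m + Poly_Mapping.single S 1 + Poly_Mapping.single T 1"
    using assms(9) by (auto simp: kempe_monoms_def a add.assoc)
  have "is_coloring adj W k h"
    using reach assms(3) by (rule kempe_reach_is_coloring)
  then obtain h' where reach': "(kempe_step adj W k)\<^sup>*\<^sup>* h h'"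
    and monom_h': "color_monom W {1..k} h' = m + Poly_Mapping.single S' 1 + Poly_Mapping.single T' 1"
    using kempe_reach_color_monom_replace_pair[OF assms(1,2) _ monom_h stable' counts] by blast
  have "(kempe_step adj W k)\<^sup>*\<^sup>* f h'"
    using reach reach' by (rule rtranclp_trans)
  then show ?thesis
    unfolding kempe_monoms_def using monom_h' by (auto simp: a' add.assoc intro!: exI[of _ h'])
qed

lemma coeff_sum_kempe_monoms_eq_0:
  fixes q :: "(nat set, 'a::field) mpoly"
  assumes "symp adj" "finite W" "is_coloring adj W k f" "q \<in> I_G2_ideal d adj"
  shows "coeff_sum (kempe_monoms adj W k f) q = 0"
  using assms(4) unfolding I_G2_ideal_def
proof (rule coeff_sum_ideal_gen_eq_0)
  fix b :: "(nat set, 'a) mpoly" and m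
  assume "b \<in> {p \<in> I_G d adj. homogeneous_deg 2 p}"
  then show "coeff_sum {a. m + a \<in> kempe_monoms adj W k f} b = 0"
    by (intro coeff_sum_eq_0_if_pi_map_eq_0)
      (auto simp: I_G_def intro: kempe_monoms_exchange[OF assms(1-3)])
qed

lemma kempe_equiv_if_xcol_diff_in_I_G2_ideal:
  assumes "symp adj" "W \<subseteq> {1..d}" "is_coloring adj W k f" "is_coloring adj W k g"
    and "(xcol W k f - xcol W k g :: (nat set, 'a::field) mpoly) \<in> I_G2_ideal d adj"
  shows "kempe_equiv adj W k f g"
proof -
  have "finite W"
    using assms(2) finite_subset by blast
  let ?M = "kempe_monoms adj W k f"
  have "color_monom W {1..k} f \<in> ?M"
    by (auto simp: kempe_monoms_def)
  moreover have "coeff_sum ?M (xcol W k f - xcol W k g :: (nat set, 'a) mpoly) = 0"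
    using assms(1) \<open>finite W\<close> assms(3,5) by (rule coeff_sum_kempe_monoms_eq_0)
  ultimately have "color_monom W {1..k} g \<in> ?M"
    by (auto simp: xcol_eq_single coeff_sum_diff coeff_sum_single split: if_splits)
  then obtain h where reach: "(kempe_step adj W k)\<^sup>*\<^sup>* f h"
    and "color_monom W {1..k} h = color_monom W {1..k} g"
    by (auto simp: kempe_monoms_def)
  moreover have "is_coloring adj W k h"
    using reach assms(3) by (rule kempe_reach_is_coloring)
  ultimately obtain h' where "(kempe_step adj W k)\<^sup>*\<^sup>* h h'" "\<forall>v\<in>W. h' v = g v"
    using kempe_reach_if_color_monom_eq[OF assms(1) \<open>finite W\<close> assms(4)] by blast
  then show ?thesis
    using reach unfolding kempe_equiv_def by (blast intro: rtranclp_trans)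
qed

theorem theorem5p1:
  fixes d k :: nat and adj :: "nat \<Rightarrow> nat \<Rightarrow> bool" and W :: "nat set"
    and f g :: "nat \<Rightarrow> nat"
  assumes "simple_graph_on d adj"
    and "1 \<le> k"
    and "W \<subseteq> {1..d}"
    and "is_coloring adj W k f" and "is_coloring adj W k g"
  shows "(kempe_equiv adj W k f g
            \<longleftrightarrow> (xcol W k f - xcol W k g :: (nat set, 'a::field) mpoly) \<in> I_G2_ideal d adj)
       \<and> ((xcol W k f - xcol W k g :: (nat set, 'a::field) mpoly) \<in> I_G2_ideal d adj
            \<longleftrightarrow> (xcol W k f - xcol W k g :: (nat set, 'a) mpoly) \<in> J_G d adj)"
proof -
  have "symp adj"
    using assms(1) by (auto simp: simple_graph_on_def symp_def)
  have i_iii: "(xcol W k f - xcol W k g :: (nat set, 'a) mpoly) \<in> J_G d adj"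
    if "kempe_equiv adj W k f g"
    using assms(3) that by (rule kempe_equiv_imp_xcol_diff_in_J_G)
  have iii_ii: "(xcol W k f - xcol W k g :: (nat set, 'a) mpoly) \<in> I_G2_ideal d adj"
    if "(xcol W k f - xcol W k g :: (nat set, 'a) mpoly) \<in> J_G d adj"
    using J_G_subset_I_G2_ideal that by (rule subsetD)
  have ii_i: "kempe_equiv adj W k f g"
    if "(xcol W k f - xcol W k g :: (nat set, 'a) mpoly) \<in> I_G2_ideal d adj"
    using \<open>symp adj\<close> assms(3-5) that by (rule kempe_equiv_if_xcol_diff_in_I_G2_ideal)
  show ?thesis
    using i_iii iii_ii ii_i by blast
qed

end
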